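(* For $n\ge2$ and all $P,Q\in\Gamma_n$, $D_{hI}(P\|Q)\le \frac12 D_{TJ}(P\|Q)$.
   Context: $\Gamma_n=\{P=(p_1,\dots,p_n): p_i>0,\ \sum p_i=1\}$. $h(P\|Q)=\frac12\sum_{i=1}^n(\sqrt{p_i}-\sqrt{q_i})^2$; $I(P\|Q)=\frac12\Big[\sum_{i=1}^n p_i\ln\frac{2p_i}{p_i+q_i}+\sum_{i=1}^n q_i\ln\frac{2q_i}{p_i+q_i}\Big]$; $J(P\|Q)=\sum_{i=1}^n(p_i-q_i)\ln\frac{p_i}{q_i}$; $T(P\|Q)=\sum_{i=1}^n\frac{p_i+q_i}{2}\ln\frac{p_i+q_i}{2\sqrt{p_iq_i}}$. $D_{hI}=h-I$, $D_{TJ}=T-\frac18J$. *)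

theory Defs
  imports Complex_Main
begin

definition Gamma :: "nat \<Rightarrow> (nat \<Rightarrow> real) set" where
  "Gamma n = {p. (\<forall>i<n. p i > 0) \<and> (\<Sum>i<n. p i) = 1}"

definition hell :: "nat \<Rightarrow> (nat \<Rightarrow> real) \<Rightarrow> (nat \<Rightarrow> real) \<Rightarrow> real" where
  "hell n p q = 1/2 * (\<Sum>i<n. (sqrt (p i) - sqrt (q i))^2)"

definition jsI :: "nat \<Rightarrow> (nat \<Rightarrow> real) \<Rightarrow> (nat \<Rightarrow> real) \<Rightarrow> real" where
  "jsI n p q = 1/2 * ((\<Sum>i<n. p i * ln (2 * p i / (p i + q i)))
                    + (\<Sum>i<n. q i * ln (2 * q i / (p i + q i))))"

definition jJ :: "nat \<Rightarrow> (nat \<Rightarrow> real) \<Rightarrow> (nat \<Rightarrow> real) \<Rightarrow> real" where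
  "jJ n p q = (\<Sum>i<n. (p i - q i) * ln (p i / q i))"

definition amgT :: "nat \<Rightarrow> (nat \<Rightarrow> real) \<Rightarrow> (nat \<Rightarrow> real) \<Rightarrow> real" where
  "amgT n p q = (\<Sum>i<n. (p i + q i) / 2 * ln ((p i + q i) / (2 * sqrt (p i * q i))))"

definition D_hI :: "nat \<Rightarrow> (nat \<Rightarrow> real) \<Rightarrow> (nat \<Rightarrow> real) \<Rightarrow> real" where
  "D_hI n p q = hell n p q - jsI n p q"

definition D_TJ :: "nat \<Rightarrow> (nat \<Rightarrow> real) \<Rightarrow> (nat \<Rightarrow> real) \<Rightarrow> real" where
  "D_TJ n p q = amgT n p q - 1/8 * jJ n p q"

end

theory Submission
  imports Defs
begin

text \<open>
  The inequality holds term by term. Writing \<open>p = s\<^sup>2\<close>, \<open>q = r\<^sup>2\<close> and \<open>t = s / r\<close>, half the \<open>D_TJ\<close>-summand minus the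
  \<open>D_hI\<close>-summand equals \<open>r\<^sup>2 gap(t)\<close>, where \<open>gap(1) = 0\<close> and \<open>gap'(t) = t gap_slope(t)\<close>
  with \<open>gap_slope(1) = 0\<close> and \<open>gap_slope'(t) = (t - 1)\<^sup>4 / (4 t\<^sup>3 (t\<^sup>2 + 1)) \<ge> 0\<close>.
  Hence \<open>gap'\<close> changes sign from negative to positive at \<open>t = 1\<close>, so \<open>gap\<close> is minimal there.
\<close>

lemma DERIV_sign_change_imp_min:
  fixes f f' :: "real \<Rightarrow> real"
  assumes deriv: "\<And>y. a < y \<Longrightarrow> (f has_real_derivative f' y) (at y)"
    and nonpos: "\<And>y. a < y \<Longrightarrow> y \<le> c \<Longrightarrow> f' y \<le> 0"
    and nonneg: "\<And>y. c \<le> y \<Longrightarrow> 0 \<le> f' y"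
    and "a < c" "a < x"
  shows "f c \<le> f x"
proof (cases "x \<le> c")
  case True
  show ?thesis
    by (rule DERIV_nonpos_imp_nonincreasing[of x c f]) (use assms True in \<open>force+\<close>)
next
  case False
  show ?thesis
  proof (rule DERIV_nonneg_imp_nondecreasing[of c x f])
    fix y assume "c \<le> y"
    with \<open>a < c\<close> have "a < y"
      by linarith
    with \<open>c \<le> y\<close> show "\<exists>d. (f has_real_derivative d) (at y) \<and> 0 \<le> d"
      using deriv nonneg by blast
  qed (use False in simp)
qed

definition hI_term :: "real \<Rightarrow> real \<Rightarrow> real" where
  "hI_term a b = 1/2 * (sqrt a - sqrt b)^2 - 1/2 * (a * ln (2*a/(a+b)) + b * ln (2*b/(a+b)))"

definition TJ_term :: "real \<Rightarrow> real \<Rightarrow> real" where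
  "TJ_term a b = (a+b)/2 * ln ((a+b)/(2*sqrt (a*b))) - 1/8 * ((a-b) * ln (a/b))"

lemma D_hI_eq_sum: "D_hI n p q = (\<Sum>i<n. hI_term (p i) (q i))"
  unfolding D_hI_def hell_def jsI_def hI_term_def
  by (simp add: sum_subtractf sum.distrib sum_distrib_left algebra_simps)

lemma D_TJ_eq_sum: "D_TJ n p q = (\<Sum>i<n. TJ_term (p i) (q i))"
  unfolding D_TJ_def amgT_def jJ_def TJ_term_def
  by (simp add: sum_subtractf sum_distrib_left)

definition gap :: "real \<Rightarrow> real" where
  "gap t = (5*t^2 - 1)/8 * ln t - (t^2 + 1)/4 * ln ((t^2 + 1)/2) - (t - 1)^2/2"

definition gap_slope :: "real \<Rightarrow> real" where
  "gap_slope t = 5/4 * ln t - 1/(8*t^2) - 1/2 * ln ((t^2 + 1)/2) - 7/8 + 1/t"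

lemma gap_1 [simp]: "gap 1 = 0"
  by (simp add: gap_def)

lemma gap_slope_1 [simp]: "gap_slope 1 = 0"
  by (simp add: gap_slope_def)

lemma has_real_derivative_gap:
  assumes "t > 0"
  shows "(gap has_real_derivative t * gap_slope t) (at t)"
proof -
  have "t^2 + 1 > 0"
    using zero_le_power2[of t] by linarith
  then have "(80 * (t * ln t) + (40 * t^2 - 8) / t) / 64
      - (8 * (t * ln ((t^2 + 1) / 2)) + 8 * t) / 16 - (4 * t - 4) / 4 = t * gap_slope t"
    using assms unfolding gap_slope_def
    by (simp add: field_simps) (simp add: algebra_simps power2_eq_square eval_nat_numeral)
  with assms \<open>t^2 + 1 > 0\<close> show ?thesis
    unfolding gap_def by (auto intro!: derivative_eq_intros)
qed

lemma has_real_derivative_gap_slope: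
  assumes "t > 0"
  shows "(gap_slope has_real_derivative (t - 1)^4 / (4 * t^3 * (t^2 + 1))) (at t)"
proof -
  have "t^2 + 1 > 0"
    using zero_le_power2[of t] by linarith
  then have "5 / (4 * t) + t / (4 * t^4) - 4 * t / (t^2 * 4 + 4) - 1 / (t * t)
      = (t - 1)^4 / (4 * t^3 * (t^2 + 1))"
    using assms by (simp add: divide_simps) (simp add: algebra_simps eval_nat_numeral)
  with assms \<open>t^2 + 1 > 0\<close> show ?thesis
    unfolding gap_slope_def by (auto intro!: derivative_eq_intros)
qed

lemma gap_slope_mono:
  assumes "0 < x" "x \<le> y"
  shows "gap_slope x \<le> gap_slope y"
proof (rule DERIV_nonneg_imp_nondecreasing[OF \<open>x \<le> y\<close>])
  fix z assume "x \<le> z"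
  with assms have "z > 0" by simp
  then show "\<exists>d. (gap_slope has_real_derivative d) (at z) \<and> 0 \<le> d"
    using has_real_derivative_gap_slope by (force simp: add_pos_nonneg)
qed

lemma gap_nonneg:
  assumes "t > 0"
  shows "0 \<le> gap t"
proof -
  have nonpos: "y * gap_slope y \<le> 0" if "0 < y" "y \<le> 1" for y
    using gap_slope_mono[OF that] that by (simp add: mult_nonneg_nonpos)
  have nonneg: "0 \<le> y * gap_slope y" if "1 \<le> y" for y
    using gap_slope_mono[of 1 y] that by simp
  have "gap 1 \<le> gap t"
    by (rule DERIV_sign_change_imp_min[OF has_real_derivative_gap nonpos nonneg]) (use assms in auto)
  then show ?thesis
    by simp
qed

lemma half_TJ_term_minus_hI_term:
  fixes s r :: real
  assumes s: "s > 0" and r: "r > 0"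
  shows "TJ_term (s^2) (r^2) / 2 - hI_term (s^2) (r^2) = r^2 * gap (s/r)"
proof -
  have S: "s^2 + r^2 > 0"
    using s r by (simp add: add_pos_pos)
  have sqrt_eqs: "sqrt (s^2) = s" "sqrt (r^2) = r" "sqrt (s^2 * r^2) = s * r"
    using s r by (simp_all add: real_sqrt_mult)
  have quotient_eq: "((s/r)^2 + 1)/2 = (s^2 + r^2)/(2*r^2)"
    using r by (simp add: field_simps)
  have ln_eqs:
    "ln (2*s^2/(s^2 + r^2)) = ln 2 + 2*ln s - ln (s^2 + r^2)"
    "ln (2*r^2/(s^2 + r^2)) = ln 2 + 2*ln r - ln (s^2 + r^2)"
    "ln ((s^2 + r^2)/(2*(s*r))) = ln (s^2 + r^2) - ln 2 - ln s - ln r"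
    "ln (s^2/r^2) = 2*ln s - 2*ln r"
    "ln (s/r) = ln s - ln r"
    "ln ((s^2 + r^2)/(2*r^2)) = ln (s^2 + r^2) - ln 2 - 2*ln r"
    using s r S by (simp_all add: ln_div ln_mult ln_realpow)
  show ?thesis
    unfolding TJ_term_def hI_term_def gap_def quotient_eq sqrt_eqs ln_eqs using r
    by (simp add: field_simps power2_eq_square)
qed

lemma hI_term_le_half_TJ_term:
  fixes a b :: real
  assumes "a > 0" "b > 0"
  shows "hI_term a b \<le> TJ_term a b / 2"
proof -
  have roots: "0 < sqrt a" "0 < sqrt b"
    using assms by simp_all
  then have "0 \<le> sqrt b ^ 2 * gap (sqrt a / sqrt b)"
    by (simp add: gap_nonneg)
  then have "0 \<le> TJ_term (sqrt a ^ 2) (sqrt b ^ 2) / 2 - hI_term (sqrt a ^ 2) (sqrt b ^ 2)"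
    by (simp only: half_TJ_term_minus_hI_term[OF roots])
  moreover have "sqrt a ^ 2 = a" "sqrt b ^ 2 = b"
    using assms by simp_all
  ultimately show ?thesis
    by (metis diff_ge_0_iff_ge)
qed

theorem proposition5p3:
  fixes n :: nat and p q :: "nat \<Rightarrow> real"
  assumes "n \<ge> 2" and "p \<in> Gamma n" and "q \<in> Gamma n"
  shows "D_hI n p q \<le> 1/2 * D_TJ n p q"
proof -
  have "(\<Sum>i<n. hI_term (p i) (q i)) \<le> (\<Sum>i<n. TJ_term (p i) (q i) / 2)"
  proof (rule sum_mono)
    fix i assume "i \<in> {..<n}"
    with assms(2,3) show "hI_term (p i) (q i) \<le> TJ_term (p i) (q i) / 2"
      by (intro hI_term_le_half_TJ_term) (auto simp: Gamma_def)
  qed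
  then show ?thesis
    by (simp add: D_hI_eq_sum D_TJ_eq_sum sum_divide_distrib)
qed

end
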